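(* Let $A$ be a densely defined closed operator in a complex Hilbert space $\mathcal{H}$ such that $\operatorname{Num}(A)$ has an interior point, $\operatorname{Num}(A)\neq\mathbb{C}$, $\operatorname{D}(A)\subset\operatorname{D}(A^* )$ and $\sigma(A)\subset\overline{\operatorname{Num}}(A)$. If $\lambda\in\partial\operatorname{Num}(A)$ is a point of unilateral infinite curvature of $\partial\overline{\operatorname{Num}}(A)$, then $\lambda\in\sigma_{ap}(A)$.
   Context: $\operatorname{Num}(A)=\{\langle Af,f\rangle: f\in\operatorname{D}(A),\|f\|=1\}$, $\overline{\operatorname{Num}}(A)$ its closure. Approximate point spectrum: $\sigma_{ap}(A)=\{\lambda\in\mathbb{C}:\exists (u_n)\subset\operatorname{D}(A),\ \|u_n\|=1,\ (A-\lambda)u_n\to0\}$. Curvature conventions. Let $\Omega\subset\mathbb{C}$ be a closed convex set with nonempty interior and $\lambda\in\partial\Omega$. There is at least one supporting line of $\Omega$ through $\lambda$; $\lambda$ is called a corner point if there is more than one. If $\lambda$ is a corner point, $\Omega$ lies in a closed sector with vertex $\lambda$ and semivertical angle $<\pi/2$; take the smallest such sector and let $l_\lambda$ be the supporting line through $\lambda$ orthogonal to the axis of this sector; otherwise $l_\lambda$ is the unique supporting line. Use rectangular coordinates $(\xi,\eta)$ with origin at $\lambda$, $\xi$-axis equal to $l_\lambda$, oriented so that $\Omega\subset\{\eta\ge 0\}$. Let $D'_\varepsilon=\{(\xi,\eta):\xi^2+\eta^2\le\varepsilon^2,\ \xi\neq 0\}$. Define $\gamma_u^+(\lambda)=\lim_{\varepsilon\downarrow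 0}\sup\{\eta/\xi^2:(\xi,\eta)\in\partial\Omega\cap D'_\varepsilon,\ \xi>0\}$ and $\gamma_l^+(\lambda)$ the same with $\inf$ in place of $\sup$; $\gamma_u^-(\lambda),\gamma_l^-(\lambda)$ are defined analogously with $\xi<0$. Set $\gamma_u(\lambda)=\max(\gamma_u^+(\lambda),\gamma_u^-(\lambda))$, $\gamma_l(\lambda)=\min(\gamma_l^+(\lambda),\gamma_l^-(\lambda))$. The point $\lambda$ is of infinite upper curvature if $\gamma_u(\lambda)=\infty$, and of unilateral infinite curvature if $\gamma_l^+(\lambda)=\infty$ or $\gamma_l^-(\lambda)=\infty$. For an operator $A$, these notions at $\lambda\in\partial\operatorname{Num}(A)$ refer to $\Omega=\overline{\operatorname{Num}}(A)$. *)

theory Defs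
  imports "HOL-Analysis.Analysis"
begin

class scaleC = scaleR +
  fixes scaleC :: "complex \<Rightarrow> 'a \<Rightarrow> 'a"
  assumes scaleR_scaleC: "scaleR r = scaleC (complex_of_real r)"

class complex_vector = scaleC + ab_group_add +
  assumes scaleC_add_right: "scaleC a (x + y) = scaleC a x + scaleC a y"
    and scaleC_add_left: "scaleC (a + b) x = scaleC a x + scaleC b x"
    and scaleC_scaleC: "scaleC a (scaleC b x) = scaleC (a * b) x"
    and scaleC_one: "scaleC 1 x = x"

section \<open>Complex inner product spaces (math convention: linear in the first argument)\<close>

class complex_inner = complex_vector + real_normed_vector +
  fixes cinner :: "'a \<Rightarrow> 'a \<Rightarrow> complex"
  assumes cinner_commute: "cinner x y = cnj (cinner y x)"
    and cinner_add_left: "cinner (x + y) z = cinner x z + cinner y z"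
    and cinner_scaleC_left: "cinner (scaleC r x) y = r * cinner x y"
    and cinner_self_real: "Im (cinner x x) = 0"
    and cinner_self_ge_zero: "0 \<le> Re (cinner x x)"
    and cinner_self_eq_zero_iff: "cinner x x = 0 \<longleftrightarrow> x = 0"
    and norm_eq_sqrt_cinner: "norm x = sqrt (Re (cinner x x))"

text \<open>A complex Hilbert space is a type of sort complex_inner together with complete_space.\<close>

definition lin_op :: "'a::complex_vector set \<Rightarrow> ('a \<Rightarrow> 'a) \<Rightarrow> bool" where
  "lin_op D A \<longleftrightarrow> 0 \<in> D \<and> (\<forall>x\<in>D. \<forall>y\<in>D. x + y \<in> D) \<and> (\<forall>c. \<forall>x\<in>D. scaleC c x \<in> D)
     \<and> (\<forall>x\<in>D. \<forall>y\<in>D. A (x + y) = A x + A y) \<and> (\<forall>c. \<forall>x\<in>D. A (scaleC c x) = scaleC c (A x))"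

definition densely_defined :: "'a::topological_space set \<Rightarrow> bool" where
  "densely_defined D \<longleftrightarrow> closure D = UNIV"

definition closed_op :: "'a::topological_space set \<Rightarrow> ('a \<Rightarrow> 'a) \<Rightarrow> bool" where
  "closed_op D A \<longleftrightarrow> closed {(x, A x) | x. x \<in> D}"

definition adj_dom :: "'a::complex_inner set \<Rightarrow> ('a \<Rightarrow> 'a) \<Rightarrow> 'a set" where
  "adj_dom D A = {g. \<exists>h. \<forall>f\<in>D. cinner (A f) g = cinner f h}"

definition num_range :: "'a::complex_inner set \<Rightarrow> ('a \<Rightarrow> 'a) \<Rightarrow> complex set" where
  "num_range D A = {cinner (A f) f | f. f \<in> D \<and> norm f = 1}"

definition resolvent_set :: "'a::complex_inner set \<Rightarrow> ('a \<Rightarrow> 'a) \<Rightarrow> complex set" where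
  "resolvent_set D A = {\<mu>. bij_betw (\<lambda>x. A x - scaleC \<mu> x) D UNIV
       \<and> (\<exists>C. \<forall>x\<in>D. norm x \<le> C * norm (A x - scaleC \<mu> x))}"

definition op_spectrum :: "'a::complex_inner set \<Rightarrow> ('a \<Rightarrow> 'a) \<Rightarrow> complex set" where
  "op_spectrum D A = - resolvent_set D A"

definition approx_point_spectrum :: "'a::{complex_inner,topological_space} set \<Rightarrow> ('a \<Rightarrow> 'a) \<Rightarrow> complex set" where
  "approx_point_spectrum D A = {\<mu>. \<exists>u::nat \<Rightarrow> 'a. (\<forall>n. u n \<in> D \<and> norm (u n) = 1)
       \<and> (\<lambda>n. A (u n) - scaleC \<mu> (u n)) \<longlonglongrightarrow> 0}"

definition supporting_line :: "complex set \<Rightarrow> complex \<Rightarrow> complex set \<Rightarrow> bool" where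
  "supporting_line \<Omega> c L \<longleftrightarrow> (\<exists>e. cmod e = 1 \<and> L = {c + of_real t * e | t. True}
      \<and> ((\<forall>z\<in>\<Omega>. 0 \<le> Im ((z - c) / e)) \<or> (\<forall>z\<in>\<Omega>. Im ((z - c) / e) \<le> 0)))"

definition corner_point :: "complex set \<Rightarrow> complex \<Rightarrow> bool" where
  "corner_point \<Omega> c \<longleftrightarrow> (\<exists>L1 L2. supporting_line \<Omega> c L1 \<and> supporting_line \<Omega> c L2 \<and> L1 \<noteq> L2)"

text \<open>Closed sector with vertex c, unit axis direction d and semivertical angle \<alpha> (0 < \<alpha> < pi/2):
  the points z with |arg((z-c)/d)| \<le> \<alpha>, together with c.\<close>
definition sector :: "complex \<Rightarrow> complex \<Rightarrow> real \<Rightarrow> complex set" where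
  "sector c d \<alpha> = {z. cmod (z - c) * cos \<alpha> \<le> Re ((z - c) / d)}"

definition min_sector :: "complex set \<Rightarrow> complex \<Rightarrow> complex \<Rightarrow> real \<Rightarrow> bool" where
  "min_sector \<Omega> c d \<alpha> \<longleftrightarrow> cmod d = 1 \<and> 0 < \<alpha> \<and> \<alpha> < pi / 2 \<and> \<Omega> \<subseteq> sector c d \<alpha>
     \<and> (\<forall>d' \<alpha>'. cmod d' = 1 \<and> 0 < \<alpha>' \<and> \<alpha>' < pi / 2 \<and> \<Omega> \<subseteq> sector c d' \<alpha>' \<longrightarrow> \<alpha> \<le> \<alpha>')"

text \<open>e is the unit direction of the oriented xi-axis l_c; coordinates of z are
  xi + i eta = (z - c) / e, and \<Omega> lies in {eta \<ge> 0}.\<close>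
definition curv_frame :: "complex set \<Rightarrow> complex \<Rightarrow> complex \<Rightarrow> bool" where
  "curv_frame \<Omega> c e \<longleftrightarrow> cmod e = 1 \<and> (\<forall>z\<in>\<Omega>. 0 \<le> Im ((z - c) / e))
     \<and> (corner_point \<Omega> c \<longrightarrow> (\<exists>d \<alpha>. min_sector \<Omega> c d \<alpha> \<and> Re (e * cnj d) = 0))"

definition gamma_l_plus :: "complex set \<Rightarrow> complex \<Rightarrow> complex \<Rightarrow> ereal" where
  "gamma_l_plus \<Omega> c e = Lim (at_right (0::real)) (\<lambda>\<epsilon>.
      INF w \<in> {w. c + e * w \<in> frontier \<Omega> \<and> cmod w \<le> \<epsilon> \<and> Re w \<noteq> 0 \<and> Re w > 0}.
        ereal (Im w / (Re w)\<^sup>2))"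

definition gamma_l_minus :: "complex set \<Rightarrow> complex \<Rightarrow> complex \<Rightarrow> ereal" where
  "gamma_l_minus \<Omega> c e = Lim (at_right (0::real)) (\<lambda>\<epsilon>.
      INF w \<in> {w. c + e * w \<in> frontier \<Omega> \<and> cmod w \<le> \<epsilon> \<and> Re w \<noteq> 0 \<and> Re w < 0}.
        ereal (Im w / (Re w)\<^sup>2))"

definition unilateral_infinite_curvature :: "complex set \<Rightarrow> complex \<Rightarrow> bool" where
  "unilateral_infinite_curvature \<Omega> c \<longleftrightarrow> (\<exists>e. curv_frame \<Omega> c e
      \<and> (gamma_l_plus \<Omega> c e = \<infinity> \<or> gamma_l_minus \<Omega> c e = \<infinity>))"

end

theory Submission
  imports Defs
begin

text \<open>
  Suppose \<open>\<lambda>\<close> is not in the approximate point spectrum, so \<open>A - \<lambda>\<close> is bounded below.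
  Work in the frame \<open>e\<close> of the curvature conventions, i.e. with \<open>B = e\<^sup>-\<^sup>1 (A - \<lambda>)\<close>, whose numerical
  range lies in the closed upper half-plane and accumulates at \<open>0\<close>. For \<open>t > 0\<close> the point
  \<open>\<lambda> - ite\<close> lies outside the closed numerical range, hence (as \<open>\<sigma>(A) \<subseteq> closure Num(A)\<close>) in the
  resolvent set, so \<open>(B + it) w = u\<close> is solvable with \<open>\<parallel>w\<parallel> = O(1)\<close>. Taking a unit vector \<open>u\<close> with
  \<open>\<langle>Bu,u\<rangle> = O(t\<^sup>2)\<close> and the trial vector \<open>u \<plusminus> t w\<close>, the nonnegativity of \<open>Im \<langle>Bv,v\<rangle>\<close> along the
  complex line through \<open>u\<close> and \<open>w\<close> forces \<open>\<langle>Bv,v\<rangle> \<approx> \<plusminus>2t + O(t\<^sup>2) i\<close>. So on each side of \<open>\<lambda>\<close>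
  the numerical range contains points arbitrarily close to \<open>\<lambda>\<close> below a fixed parabola
  \<open>\<eta> = K \<xi>\<^sup>2\<close>, and then so does the boundary, contradicting infinite lower curvature.
\<close>

lemma scaleC_zero_right [simp]: "scaleC a (0::'a::complex_vector) = 0"
proof -
  have "scaleC a (0::'a) = scaleC a 0 + scaleC a 0"
    using scaleC_add_right[of a 0 0] by simp
  then show ?thesis by simp
qed

lemma scaleC_zero_left [simp]: "scaleC 0 (x::'a::complex_vector) = 0"
proof -
  have "scaleC 0 x = scaleC 0 x + scaleC 0 x"
    using scaleC_add_left[of 0 0 x] by simp
  then show ?thesis by simp
qed

lemma scaleC_minus_right: "scaleC a (- x) = - scaleC a (x::'a::complex_vector)"
  using scaleC_add_right[of a "- x" x] by (simp add: eq_neg_iff_add_eq_0)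

lemma scaleC_diff_right: "scaleC a (x - y) = scaleC a x - scaleC a (y::'a::complex_vector)"
  by (simp only: diff_conv_add_uminus scaleC_add_right scaleC_minus_right)

lemma scaleC_minus_left: "scaleC (- a) x = - scaleC a (x::'a::complex_vector)"
  using scaleC_add_left[of "- a" a x] by (simp add: eq_neg_iff_add_eq_0)

lemma scaleC_diff_left: "scaleC (a - b) x = scaleC a x - scaleC b (x::'a::complex_vector)"
  by (simp only: diff_conv_add_uminus scaleC_add_left scaleC_minus_left)

lemma cinner_zero_left [simp]: "cinner 0 (y::'a::complex_inner) = 0"
  using cinner_scaleC_left[of 0 0 y] by simp

lemma cinner_zero_right [simp]: "cinner (x::'a::complex_inner) 0 = 0"
  using cinner_commute[of x 0] by simp

lemma cinner_diff_left: "cinner (x - z) y = cinner x y - cinner z (y::'a::complex_inner)"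
  using cinner_add_left[of "x - z" z y] by (simp add: algebra_simps)

lemma cinner_add_right: "cinner x (y + z) = cinner x y + cinner x (z::'a::complex_inner)"
  by (metis cinner_add_left cinner_commute complex_cnj_add)

lemma cinner_diff_right: "cinner x (y - z) = cinner x y - cinner x (z::'a::complex_inner)"
  by (metis cinner_diff_left cinner_commute complex_cnj_diff)

lemma cinner_scaleC_right: "cinner x (scaleC r y) = cnj r * cinner x (y::'a::complex_inner)"
  by (metis cinner_scaleC_left cinner_commute complex_cnj_mult)

lemma cinner_self: "cinner x x = complex_of_real ((norm (x::'a::complex_inner))\<^sup>2)"
  using norm_eq_sqrt_cinner[of x] cinner_self_ge_zero[of x] cinner_self_real[of x]
  by (simp add: complex_eq_iff)

lemma norm_scaleC: "norm (scaleC c x) = cmod c * norm (x::'a::complex_inner)"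
proof -
  have "complex_of_real ((norm (scaleC c x))\<^sup>2) = cinner (scaleC c x) (scaleC c x)"
    by (rule cinner_self [symmetric])
  also have "\<dots> = c * cnj c * complex_of_real ((norm x)\<^sup>2)"
    unfolding cinner_scaleC_left cinner_scaleC_right cinner_self [of x] by simp
  also have "c * cnj c = complex_of_real ((cmod c)\<^sup>2)"
    by (metis complex_norm_square)
  finally have "(norm (scaleC c x))\<^sup>2 = (cmod c * norm x)\<^sup>2"
    by (simp only: of_real_mult [symmetric] of_real_eq_iff power_mult_distrib)
  then show ?thesis by (simp add: power2_eq_iff_nonneg)
qed

lemma cinner_expand:
  fixes x y x' y' :: "'a::complex_inner"
  shows "cinner (x + scaleC \<zeta> y) (x' + scaleC \<zeta> y') =
    cinner x x' + cnj \<zeta> * cinner x y' + \<zeta> * cinner y x' + \<zeta> * cnj \<zeta> * cinner y y'"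
  by (simp add: cinner_add_left cinner_add_right cinner_scaleC_left cinner_scaleC_right algebra_simps)

text \<open>Cauchy--Schwarz, proved by expanding \<open>\<parallel>x - t y\<parallel>\<^sup>2 \<ge> 0\<close> at the minimising \<open>t\<close>.\<close>
lemma cauchy_schwarz: "cmod (cinner x y) \<le> norm x * norm (y::'a::complex_inner)"
proof (cases "y = 0")
  case True
  then show ?thesis by simp
next
  case False
  define Y where "Y = (norm y)\<^sup>2"
  have Y: "Y > 0" using False by (simp add: Y_def)
  define t where "t = cinner x y / complex_of_real Y"
  have "0 \<le> Re (cinner (x - scaleC t y) (x - scaleC t y))"
    by (rule cinner_self_ge_zero)
  also have "cinner (x - scaleC t y) (x - scaleC t y)
      = complex_of_real ((norm x)\<^sup>2 - (cmod (cinner x y))\<^sup>2 / Y)"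
    using Y cinner_self[of x] cinner_self[of y] cinner_commute[of y x]
      complex_norm_square[of "cinner x y"]
    by (simp add: t_def Y_def cinner_diff_left cinner_diff_right cinner_scaleC_left
        cinner_scaleC_right field_simps power2_eq_square)
  finally have "(cmod (cinner x y))\<^sup>2 \<le> (norm x)\<^sup>2 * Y"
    using Y by (simp add: divide_le_eq)
  then have "(cmod (cinner x y))\<^sup>2 \<le> (norm x * norm y)\<^sup>2"
    by (simp add: Y_def power_mult_distrib)
  then show ?thesis by (rule power2_le_imp_le) simp
qed

lemma lin_op_affine:
  assumes "lin_op D A"
  shows "lin_op D (\<lambda>x. scaleC k (A x - scaleC m x))"
proof -
  have "scaleC k (A (scaleC c x) - scaleC m (scaleC c x)) = scaleC c (scaleC k (A x - scaleC m x))"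
    if "x \<in> D" for c x
    using assms that
    by (simp add: lin_op_def scaleC_diff_right scaleC_scaleC mult.commute mult.left_commute)
  then show ?thesis
    using assms unfolding lin_op_def
    by (simp add: scaleC_add_right scaleC_diff_right algebra_simps)
qed

text \<open>If \<open>\<mu>\<close> is not in the approximate point spectrum, then \<open>A - \<mu>\<close> is bounded below:
  otherwise normalising vectors with \<open>\<parallel>(A - \<mu>) x\<parallel> < \<parallel>x\<parallel>/(n+1)\<close> gives a Weyl sequence.\<close>
lemma bounded_below_off_approx_point_spectrum:
  assumes lin: "lin_op D A" and nap: "\<mu> \<notin> approx_point_spectrum D A"
  shows "\<exists>c>0. \<forall>x\<in>D. c * norm x \<le> norm (A x - scaleC \<mu> x)"
proof (rule ccontr)
  define L where "L x = A x - scaleC \<mu> x" for x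
  have L_scale: "L (scaleC r x) = scaleC r (L x)" if "x \<in> D" for r x
    using lin_op_affine[OF lin, of 1 \<mu>] that by (simp add: lin_op_def scaleC_one L_def)
  assume "\<not> (\<exists>c>0. \<forall>x\<in>D. c * norm x \<le> norm (A x - scaleC \<mu> x))"
  then have "\<forall>n::nat. \<exists>x\<in>D. norm (L x) < norm x / real (Suc n)"
    unfolding L_def by (metis divide_inverse inverse_positive_iff_positive mult.commute
        not_le of_nat_0_less_iff zero_less_Suc)
  then obtain x where xD: "\<And>n. x n \<in> D" and x: "\<And>n. norm (L (x n)) < norm (x n) / real (Suc n)"
    by metis
  have x0: "x n \<noteq> 0" for n
    using x[of n] by auto
  define u where "u n = scaleC (complex_of_real (1 / norm (x n))) (x n)" for n
  have uD: "u n \<in> D" for n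
    using lin xD by (simp add: lin_op_def u_def)
  have u1: "norm (u n) = 1" for n
    using x0 by (simp add: u_def norm_scaleC norm_divide)
  have "norm (L (u n)) < 1 / real (Suc n)" for n
    using x[of n] x0 xD by (simp add: u_def L_scale norm_scaleC norm_divide field_simps)
  then have "(\<lambda>n. L (u n)) \<longlonglongrightarrow> 0"
    by (rule LIMSEQ_norm_0)
  then have "\<mu> \<in> approx_point_spectrum D A"
    unfolding approx_point_spectrum_def L_def using uD u1 by blast
  with nap show False by simp
qed

lemma num_range_affine:
  "num_range D (\<lambda>x. scaleC k (A x - scaleC m x)) = (\<lambda>z. k * (z - m)) ` num_range D A"
proof -
  have "cinner (scaleC k (A f - scaleC m f)) f = k * (cinner (A f) f - m)" if "norm f = 1" for f
    using that by (simp add: cinner_scaleC_left cinner_diff_left cinner_self)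
  then show ?thesis
    unfolding num_range_def by (auto; metis)
qed

lemma num_range_normalize:
  assumes lin: "lin_op D A" and v: "v \<in> D" "v \<noteq> 0"
  shows "cinner (A v) v / complex_of_real ((norm v)\<^sup>2) \<in> num_range D A"
proof -
  define r where "r = complex_of_real (1 / norm v)"
  have D: "scaleC r v \<in> D" and A: "A (scaleC r v) = scaleC r (A v)"
    using lin v by (simp_all add: lin_op_def)
  have "norm (scaleC r v) = 1"
    using v by (simp add: r_def norm_scaleC norm_divide)
  moreover have "cinner (A (scaleC r v)) (scaleC r v) = cinner (A v) v / complex_of_real ((norm v)\<^sup>2)"
    unfolding A by (simp add: r_def cinner_scaleC_left cinner_scaleC_right power2_eq_square field_simps)
  ultimately show ?thesis
    using D unfolding num_range_def by force
qed

lemma form_Im_nonneg: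
  assumes lin: "lin_op D A" and upper: "\<forall>z\<in>num_range D A. 0 \<le> Im z" and v: "v \<in> D"
  shows "0 \<le> Im (cinner (A v) v)"
proof (cases "v = 0")
  case True
  then show ?thesis by simp
next
  case False
  then have "0 \<le> Im (cinner (A v) v / complex_of_real ((norm v)\<^sup>2))"
    using num_range_normalize[OF lin v] upper by blast
  with False show ?thesis
    by (simp add: Im_divide_of_real zero_le_divide_iff)
qed

section \<open>Curvature and boundary points of a closed convex set\<close>

text \<open>For a function \<open>g\<close> that decreases as \<open>\<epsilon>\<close> grows, the limit at \<open>0\<^sup>+\<close> exists and equals
  \<open>SUP \<epsilon>>0. g \<epsilon>\<close>; so if it is \<open>\<infinity>\<close>, \<open>g \<epsilon>\<close> exceeds any bound for some \<open>\<epsilon> > 0\<close>.\<close>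
lemma antimono_Lim_at_right_infinity:
  fixes g :: "real \<Rightarrow> ereal"
  assumes antimono: "\<And>e1 e2. e1 \<le> e2 \<Longrightarrow> g e2 \<le> g e1"
    and lim: "Lim (at_right 0) g = \<infinity>"
  shows "\<exists>\<epsilon>>0. ereal K < g \<epsilon>"
proof -
  define L where "L = (SUP \<epsilon>\<in>{0<..}. g \<epsilon>)"
  have "(g \<longlongrightarrow> L) (at_right 0)"
  proof (rule order_tendstoI)
    fix a
    assume "a < L"
    then obtain e0 where e0: "0 < e0" "a < g e0"
      unfolding L_def by (auto simp: less_SUP_iff)
    have "eventually (\<lambda>x. x < e0) (at_right (0::real))"
      using e0(1) by (auto simp: eventually_at_right)
    then show "eventually (\<lambda>x. a < g x) (at_right 0)"
      by eventually_elim (use e0 antimono in \<open>auto intro: less_le_trans\<close>)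
  next
    fix a
    assume "L < a"
    have "eventually (\<lambda>x. x > 0) (at_right (0::real))"
      by (simp add: eventually_at_right_less)
    then show "eventually (\<lambda>x. g x < a) (at_right 0)"
    proof eventually_elim
      case (elim x)
      then have "g x \<le> L"
        unfolding L_def by (intro SUP_upper) auto
      with \<open>L < a\<close> show ?case by simp
    qed
  qed
  then have "L = \<infinity>"
    using lim tendsto_Lim[of "at_right 0" g L] by simp
  then have "ereal K < L"
    by simp
  then show ?thesis
    unfolding L_def by (auto simp: less_SUP_iff)
qed

lemma infinite_lower_curvature_bound:
  assumes P: "\<And>x. P x \<Longrightarrow> x \<noteq> 0"
    and lim: "Lim (at_right (0::real)) (\<lambda>\<epsilon>. INF w \<in> {w. c + e * w \<in> frontier \<Omega> \<and> cmod w \<le> \<epsilon>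
      \<and> Re w \<noteq> 0 \<and> P (Re w)}. ereal (Im w / (Re w)\<^sup>2)) = \<infinity>"
  shows "\<exists>\<delta>>0. \<forall>w. c + e * w \<in> frontier \<Omega> \<and> cmod w \<le> \<delta> \<and> P (Re w)
      \<longrightarrow> K < Im w / (Re w)\<^sup>2"
proof -
  define S where "S \<epsilon> = {w. c + e * w \<in> frontier \<Omega> \<and> cmod w \<le> \<epsilon> \<and> Re w \<noteq> 0 \<and> P (Re w)}" for \<epsilon>
  obtain \<delta> where "\<delta> > 0" and \<delta>: "ereal K < (INF w \<in> S \<delta>. ereal (Im w / (Re w)\<^sup>2))"
    by (rule antimono_Lim_at_right_infinity[OF _ lim[folded S_def], THEN exE])
      (auto simp: S_def intro!: INF_superset_mono)
  have "K < Im w / (Re w)\<^sup>2" if "w \<in> S \<delta>" for w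
    using less_le_trans[OF \<delta> INF_lower[OF that]] by simp
  with \<open>\<delta> > 0\<close> P show ?thesis
    by (auto simp: S_def)
qed

lemma unilateral_infinite_curvature_side:
  assumes "unilateral_infinite_curvature \<Omega> c"
  obtains e and \<sigma> :: real where "curv_frame \<Omega> c e" "\<sigma> = 1 \<or> \<sigma> = -1"
    "\<And>K. \<exists>\<delta>>0. \<forall>w. c + e * w \<in> frontier \<Omega> \<and> cmod w \<le> \<delta> \<and> 0 < \<sigma> * Re w
        \<longrightarrow> K < Im w / (Re w)\<^sup>2"
proof -
  obtain e where e: "curv_frame \<Omega> c e" and "gamma_l_plus \<Omega> c e = \<infinity> \<or> gamma_l_minus \<Omega> c e = \<infinity>"
    using assms unfolding unilateral_infinite_curvature_def by blast
  then consider "gamma_l_plus \<Omega> c e = \<infinity>" | "gamma_l_minus \<Omega> c e = \<infinity>"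
    by blast
  then show ?thesis
  proof cases
    case 1
    then show ?thesis
      using infinite_lower_curvature_bound[where P = "\<lambda>x. 0 < x"]
      by (intro that[OF e, of 1]) (simp_all add: gamma_l_plus_def)
  next
    case 2
    then show ?thesis
      using infinite_lower_curvature_bound[where P = "\<lambda>x. x < 0"]
      by (intro that[OF e, of "-1"]) (simp_all add: gamma_l_minus_def)
  qed
qed

text \<open>A point \<open>p\<close> of a closed set lying in the half-plane \<open>Im ((z - c)/e) \<ge> 0\<close> has a boundary
  point vertically below it (in the frame \<open>e\<close>): the segment from \<open>p\<close> down across the line must
  leave the set.\<close>
lemma frontier_point_below:
  fixes \<Omega> :: "complex set"
  assumes closed: "closed \<Omega>" and e: "cmod e = 1" and upper: "\<forall>z\<in>\<Omega>. 0 \<le> Im ((z - c) / e)"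
    and p: "c + e * W \<in> \<Omega>"
  shows "\<exists>w. c + e * w \<in> frontier \<Omega> \<and> Re w = Re W \<and> 0 \<le> Im w \<and> Im w \<le> Im W"
proof -
  have e0: "e \<noteq> 0" using e by auto
  have ImW: "0 \<le> Im W" using upper p e0 by force
  define P0 where "P0 = c + e * Complex (Re W) (-1)"
  have "P0 \<notin> \<Omega>"
    using upper e0 by (force simp: P0_def)
  then have "closed_segment P0 (c + e * W) \<inter> frontier \<Omega> \<noteq> {}"
    by (intro connected_Int_frontier) (use p in auto)
  then obtain x where x: "x \<in> frontier \<Omega>" "x \<in> closed_segment P0 (c + e * W)"
    by blast
  then obtain u where u: "0 \<le> u" "u \<le> 1" and xu: "x = (1 - u) *\<^sub>R P0 + u *\<^sub>R (c + e * W)"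
    by (auto simp: in_segment)
  define w where "w = Complex (Re W) (u * Im W - (1 - u))"
  have xw: "x = c + e * w"
    unfolding xu P0_def w_def scaleR_conv_of_real by (simp add: complex_eq_iff algebra_simps)
  have "x \<in> \<Omega>"
    using x closed by (simp add: frontier_def)
  then have "0 \<le> Im w"
    using upper xw e0 by force
  moreover have "Im w \<le> Im W"
    using u ImW mult_left_le_one_le[of "Im W" u] by (simp add: w_def algebra_simps)
  ultimately show ?thesis
    using x xw by (auto simp: w_def)
qed

lemma frontier_point_below_parabola:
  fixes \<Omega> :: "complex set"
  assumes closed: "closed \<Omega>" and e: "cmod e = 1" and upper: "\<forall>z\<in>\<Omega>. 0 \<le> Im ((z - c) / e)"
    and z: "c + e * z \<in> \<Omega>" "0 < \<sigma> * Re z" "Im z \<le> K * (Re z)\<^sup>2"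
  shows "\<exists>w. c + e * w \<in> frontier \<Omega> \<and> cmod w \<le> cmod z \<and> 0 < \<sigma> * Re w
    \<and> Im w / (Re w)\<^sup>2 \<le> K"
proof -
  obtain w where w: "c + e * w \<in> frontier \<Omega>" "Re w = Re z" "0 \<le> Im w" "Im w \<le> Im z"
    using frontier_point_below[OF closed e upper z(1)] by blast
  have "Re z \<noteq> 0" using z(2) by auto
  have "cmod w \<le> cmod z"
    using w(2-4) by (simp add: cmod_def power_mono)
  moreover have "Im w / (Re w)\<^sup>2 \<le> K"
    using w(2,4) z(3) \<open>Re z \<noteq> 0\<close> by (simp add: divide_le_eq)
  ultimately show ?thesis
    using w(1,2) z(2) by auto
qed

lemma quadratic_nonneg_linear_coeff:
  fixes p q r t R :: real
  assumes "t > 0" "0 \<le> p + t * q + t\<^sup>2 * r" "0 \<le> p - t * q + t\<^sup>2 * r" "p \<le> t\<^sup>2" "r \<le> R"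
  shows "\<bar>q\<bar> \<le> t * (1 + R)"
proof -
  have "t * \<bar>q\<bar> \<le> p + t\<^sup>2 * r"
    using assms(2,3) by (cases "q \<ge> 0") auto
  also have "\<dots> \<le> t\<^sup>2 + t\<^sup>2 * R"
    using assms(4,5) mult_left_mono[of r R "t\<^sup>2"] by simp
  also have "\<dots> = t * (t * (1 + R))"
    by (simp add: power2_eq_square algebra_simps)
  finally show ?thesis
    using \<open>t > 0\<close> by simp
qed

lemma line_form_coefficients:
  fixes z0 a b d :: complex and t M R :: real
  assumes t: "t > 0" and z0: "cmod z0 \<le> t\<^sup>2" and b: "cmod (b - 1) \<le> t * M" and d: "cmod d \<le> R"
    and real_dir: "\<And>s. s \<in> {t, -t} \<Longrightarrow> 0 \<le> Im z0 + s * Im (a + b) + s\<^sup>2 * Im d"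
    and imag_dir: "\<And>s. s \<in> {t, -t} \<Longrightarrow> 0 \<le> Im z0 + s * (Re b - Re a) + s\<^sup>2 * Im d"
  shows "\<bar>Im (a + b)\<bar> \<le> t * (1 + R)" "\<bar>Re (a + b) - 2\<bar> \<le> t * (1 + R + 2 * M)"
proof -
  have Iz: "Im z0 \<le> t\<^sup>2" using abs_Im_le_cmod[of z0] z0 by linarith
  have Id: "Im d \<le> R" using abs_Im_le_cmod[of d] d by linarith
  show "\<bar>Im (a + b)\<bar> \<le> t * (1 + R)"
    using real_dir[of t] real_dir[of "-t"] Iz Id t
    by (intro quadratic_nonneg_linear_coeff[of t "Im z0" _ "Im d"]) auto
  have "\<bar>Re b - Re a\<bar> \<le> t * (1 + R)"
    using imag_dir[of t] imag_dir[of "-t"] Iz Id t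
    by (intro quadratic_nonneg_linear_coeff[of t "Im z0" _ "Im d"]) auto
  moreover have "\<bar>Re b - 1\<bar> \<le> t * M"
    using abs_Re_le_cmod[of "b - 1"] b by simp
  ultimately show "\<bar>Re (a + b) - 2\<bar> \<le> t * (1 + R + 2 * M)"
    by (simp add: abs_le_iff algebra_simps)
qed

lemma line_form_value:
  fixes z0 s d :: complex and t M R \<sigma> :: real
  assumes sig: "\<sigma> = 1 \<or> \<sigma> = -1" and t: "t > 0" and z0: "cmod z0 \<le> t\<^sup>2" and d: "cmod d \<le> R"
    and Is: "\<bar>Im s\<bar> \<le> t * (1 + R)" and Rs: "\<bar>Re s - 2\<bar> \<le> t * (1 + R + 2 * M)"
    and small: "t * (2 + 2 * R + 2 * M) \<le> 1"
  defines "Q \<equiv> z0 + complex_of_real (\<sigma> * t) * s + complex_of_real (t\<^sup>2) * d"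
  shows "t \<le> \<sigma> * Re Q" "Im Q \<le> (2 + 2 * R) * t\<^sup>2" "\<bar>Re Q\<bar> \<le> 3 * t"
proof -
  have Iz: "\<bar>Im z0\<bar> \<le> t\<^sup>2" using abs_Im_le_cmod[of z0] z0 by linarith
  have Rz: "\<bar>Re z0\<bar> \<le> t\<^sup>2" using abs_Re_le_cmod[of z0] z0 by linarith
  have Id: "\<bar>t\<^sup>2 * Im d\<bar> \<le> t\<^sup>2 * R" using abs_Im_le_cmod[of d] d by (simp add: abs_mult mult_left_mono)
  have Rd: "\<bar>t\<^sup>2 * Re d\<bar> \<le> t\<^sup>2 * R" using abs_Re_le_cmod[of d] d by (simp add: abs_mult mult_left_mono)
  have "t\<^sup>2 * (2 + 2 * R + 2 * M) \<le> t"
    using mult_left_mono[OF small, of t] t by (simp add: power2_eq_square)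
  define E where "E = \<sigma> * Re Q - 2 * t"
  have "E = \<sigma> * Re z0 + t * (Re s - 2) + \<sigma> * (t\<^sup>2 * Re d)"
    using sig by (auto simp: E_def Q_def algebra_simps)
  moreover have "\<bar>t * (Re s - 2)\<bar> \<le> t\<^sup>2 * (1 + R + 2 * M)"
    using mult_left_mono[OF Rs, of t] t by (simp add: abs_mult power2_eq_square)
  moreover have "\<bar>\<sigma> * Re z0\<bar> \<le> t\<^sup>2" "\<bar>\<sigma> * (t\<^sup>2 * Re d)\<bar> \<le> t\<^sup>2 * R"
    using sig Rz Rd by auto
  ultimately have "\<bar>E\<bar> \<le> t\<^sup>2 * (2 + 2 * R + 2 * M)"
    by (simp add: abs_le_iff algebra_simps)
  with \<open>t\<^sup>2 * (2 + 2 * R + 2 * M) \<le> t\<close> have "t \<le> \<sigma> * Re Q \<and> \<sigma> * Re Q \<le> 3 * t"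
    by (simp add: E_def abs_le_iff)
  moreover have "\<bar>Re Q\<bar> = \<bar>\<sigma> * Re Q\<bar>"
    using sig by auto
  ultimately show "t \<le> \<sigma> * Re Q" "\<bar>Re Q\<bar> \<le> 3 * t"
    using t by auto
  have "\<bar>\<sigma> * t * Im s\<bar> \<le> t * (t * (1 + R))"
    using sig Is t by (auto simp: abs_mult mult_left_mono)
  then show "Im Q \<le> (2 + 2 * R) * t\<^sup>2"
    using Iz Id by (simp add: Q_def abs_le_iff power2_eq_square algebra_simps)
qed

lemma normalized_value_below_parabola:
  fixes Q :: complex and t R N \<sigma> :: real
  assumes sig: "\<sigma> = 1 \<or> \<sigma> = -1" and t: "0 < t" "t \<le> 1" and R: "0 \<le> R"
    and Q: "t \<le> \<sigma> * Re Q" "0 \<le> Im Q" "Im Q \<le> (2 + 2 * R) * t\<^sup>2" "\<bar>Re Q\<bar> \<le> 3 * t"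
    and N: "1 / 2 \<le> N" "N \<le> 3"
  defines "w \<equiv> Q / complex_of_real N"
  shows "0 < \<sigma> * Re w" "cmod w \<le> (10 + 4 * R) * t" "Im w \<le> 6 * (1 + R) * (Re w)\<^sup>2"
proof -
  have N0: "N > 0" using N by simp
  have Re: "Re w = Re Q / N" and Im: "Im w = Im Q / N"
    by (simp_all add: w_def Re_divide_of_real Im_divide_of_real)
  show "0 < \<sigma> * Re w"
    using Q(1) t N0 by (simp add: Re zero_less_divide_iff)
  have "t\<^sup>2 \<le> t" using t by (simp add: power2_eq_square mult_left_le_one_le)
  have "\<bar>Re w\<bar> = \<bar>Re Q\<bar> / N" "\<bar>Im w\<bar> = Im Q / N"
    using N0 Q(2) by (simp_all add: Re Im abs_divide)
  moreover have "\<bar>Re Q\<bar> / N \<le> \<bar>Re Q\<bar> / (1 / 2)" "Im Q / N \<le> Im Q / (1 / 2)"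
    using N Q(2) by (intro divide_left_mono; simp)+
  ultimately have "\<bar>Re w\<bar> \<le> \<bar>Re Q\<bar> / (1 / 2)" "\<bar>Im w\<bar> \<le> Im Q / (1 / 2)"
    by simp_all
  have "cmod w \<le> \<bar>Re w\<bar> + \<bar>Im w\<bar>" by (rule cmod_le)
  also have "\<dots> \<le> 2 * (3 * t) + 2 * ((2 + 2 * R) * t\<^sup>2)"
    using \<open>\<bar>Re w\<bar> \<le> \<bar>Re Q\<bar> / (1 / 2)\<close> \<open>\<bar>Im w\<bar> \<le> Im Q / (1 / 2)\<close> Q(3,4) by simp
  also have "\<dots> \<le> (10 + 4 * R) * t"
    using \<open>t\<^sup>2 \<le> t\<close> R mult_left_mono[of "t\<^sup>2" t "2 + 2 * R"] by (simp add: algebra_simps)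
  finally show "cmod w \<le> (10 + 4 * R) * t" .
  have "t \<le> \<bar>Re Q\<bar>"
    using Q(1) sig by auto
  then have ReQ: "t\<^sup>2 \<le> (Re Q)\<^sup>2"
    using t power_mono[of t "\<bar>Re Q\<bar>" 2] by simp
  have "Im w * N\<^sup>2 = Im Q * N" by (simp add: Im power2_eq_square)
  also have "\<dots> \<le> (2 + 2 * R) * t\<^sup>2 * 3"
    using Q(2,3) N by (intro mult_mono) auto
  also have "\<dots> = 6 * (1 + R) * t\<^sup>2"
    by simp
  also have "\<dots> \<le> 6 * (1 + R) * (Re Q)\<^sup>2"
    using ReQ R by (intro mult_left_mono) auto
  also have "\<dots> = 6 * (1 + R) * (Re w)\<^sup>2 * N\<^sup>2"
    using N0 by (simp add: Re power_divide)
  finally show "Im w \<le> 6 * (1 + R) * (Re w)\<^sup>2"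
    using N0 by simp
qed

lemma norm_perturbed_unit:
  fixes u x :: "'a::real_normed_vector"
  assumes "norm u = 1" "norm x \<le> 1 / 4"
  shows "1 / 2 \<le> (norm (u + x))\<^sup>2" "(norm (u + x))\<^sup>2 \<le> 3"
proof -
  have "3 / 4 \<le> norm (u + x)" "norm (u + x) \<le> 5 / 4"
    using assms norm_triangle_ineq[of u x] norm_diff_ineq[of u x] by auto
  then have "(3 / 4)\<^sup>2 \<le> (norm (u + x))\<^sup>2" "(norm (u + x))\<^sup>2 \<le> (5 / 4)\<^sup>2"
    by (auto intro: power_mono)
  then show "1 / 2 \<le> (norm (u + x))\<^sup>2" "(norm (u + x))\<^sup>2 \<le> 3"
    by (simp_all add: power2_eq_square)
qed

section \<open>Points of the numerical range near a boundary point\<close>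

lemma form_along_line:
  assumes lin: "lin_op D B" and u: "u \<in> D" and w: "w \<in> D"
  shows "cinner (B (u + scaleC \<zeta> w)) (u + scaleC \<zeta> w) = cinner (B u) u + cnj \<zeta> * cinner (B u) w
      + \<zeta> * cinner (B w) u + \<zeta> * cnj \<zeta> * cinner (B w) w"
proof -
  have "B (u + scaleC \<zeta> w) = B u + scaleC \<zeta> (B w)"
    using lin u w by (simp add: lin_op_def)
  then show ?thesis
    by (simp add: cinner_expand)
qed

lemma resolvent_equation_coefficients:
  fixes B :: "'a::complex_inner \<Rightarrow> 'a" and t M :: real
  assumes u: "norm u = 1" and w: "norm w \<le> M" "B w + scaleC (\<i> * complex_of_real t) w = u"
    and t: "0 \<le> t" "t \<le> 1"
  shows "cmod (cinner (B w) u - 1) \<le> t * M" "cmod (cinner (B w) w) \<le> M + M\<^sup>2"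
proof -
  have Bw: "B w = u - scaleC (\<i> * complex_of_real t) w"
    using w(2) by (simp add: eq_diff_eq)
  have cs: "cmod (cinner u w) \<le> M" "cmod (cinner w u) \<le> M"
    using cauchy_schwarz[of u w] cauchy_schwarz[of w u] u w(1) by simp_all
  have "cmod (cinner (B w) u - 1) = t * cmod (cinner w u)"
    using u t(1) by (simp add: Bw cinner_diff_left cinner_scaleC_left cinner_self norm_mult)
  then show "cmod (cinner (B w) u - 1) \<le> t * M"
    using cs(2) t(1) by (simp add: mult_left_mono)
  have "cmod (cinner (B w) w) \<le> cmod (cinner u w) + t * (norm w)\<^sup>2"
    using norm_triangle_ineq4[of "cinner u w" "\<i> * complex_of_real t * complex_of_real ((norm w)\<^sup>2)"] t(1)
    by (simp add: Bw cinner_diff_left cinner_scaleC_left cinner_self norm_mult norm_power)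
  also have "\<dots> \<le> M + 1 * M\<^sup>2"
    using cs(1) t w(1) by (intro add_mono mult_mono power_mono) auto
  finally show "cmod (cinner (B w) w) \<le> M + M\<^sup>2"
    by simp
qed

lemma resolvent_equation_norm_bound:
  fixes B :: "'a::complex_inner \<Rightarrow> 'a" and c t :: real
  assumes c: "c > 0" "c * norm w \<le> norm (B w)" and u: "norm u = 1"
    and w: "B w + scaleC (\<i> * complex_of_real t) w = u" and t: "0 \<le> t" "t * 2 \<le> c"
  shows "norm w \<le> 2 / c"
proof -
  have "c * norm w \<le> norm (u - scaleC (\<i> * complex_of_real t) w)"
    using c(2) w by (metis add_diff_cancel_right')
  also have "\<dots> \<le> 1 + t * norm w"
    using u t(1) norm_triangle_ineq4[of u "scaleC (\<i> * complex_of_real t) w"]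
    by (simp add: norm_scaleC norm_mult)
  finally have "(c - t) * norm w \<le> 1"
    by (simp add: algebra_simps)
  moreover have "c / 2 * norm w \<le> (c - t) * norm w"
    using t(2) by (intro mult_right_mono) auto
  ultimately show ?thesis
    using c(1) by (simp add: field_simps)
qed

lemma perturbed_vector_below_parabola:
  fixes B :: "'a::complex_inner \<Rightarrow> 'a" and t M \<sigma> :: real
  assumes lin: "lin_op D B" and upper: "\<forall>x\<in>D. 0 \<le> Im (cinner (B x) x)"
    and u: "u \<in> D" "norm u = 1" "cmod (cinner (B u) u) \<le> t\<^sup>2"
    and w: "w \<in> D" "norm w \<le> M" "B w + scaleC (\<i> * complex_of_real t) w = u"
    and t: "0 < t" "t \<le> 1" "t * M \<le> 1 / 4" "t * (2 + 2 * (M + M\<^sup>2) + 2 * M) \<le> 1"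
    and sig: "\<sigma> = 1 \<or> \<sigma> = -1"
  shows "\<exists>z\<in>num_range D B. 0 < \<sigma> * Re z \<and> cmod z \<le> (10 + 4 * (M + M\<^sup>2)) * t
      \<and> Im z \<le> 6 * (1 + (M + M\<^sup>2)) * (Re z)\<^sup>2"
proof -
  define q where "q x = cinner (B x) x" for x
  define a b d where "a = cinner (B u) w" and "b = cinner (B w) u" and "d = cinner (B w) w"
  note bd = resolvent_equation_coefficients[where B = B and w = w,
      OF u(2) w(2,3) less_imp_le[OF t(1)] t(2), folded b_def d_def]
  have line: "q (u + scaleC \<zeta> w) = q u + cnj \<zeta> * a + \<zeta> * b + \<zeta> * cnj \<zeta> * d" for \<zeta>
    using form_along_line[OF lin u(1) w(1)] by (simp add: q_def a_def b_def d_def)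
  have onD: "u + scaleC \<zeta> w \<in> D" for \<zeta>
    using lin u(1) w(1) by (simp add: lin_op_def)
  then have "0 \<le> Im (q (u + scaleC (complex_of_real s) w))"
    "0 \<le> Im (q (u + scaleC (\<i> * complex_of_real s) w))" for s
    using upper by (simp_all add: q_def)
  then have dirs: "0 \<le> Im (q u) + s * Im (a + b) + s\<^sup>2 * Im d"
    "0 \<le> Im (q u) + s * (Re b - Re a) + s\<^sup>2 * Im d" for s
    unfolding line by (simp_all add: power2_eq_square algebra_simps)
  note coeffs = line_form_coefficients[OF t(1) u(3)[folded q_def] bd(1) bd(2) dirs]
  define v where "v = u + scaleC (complex_of_real (\<sigma> * t)) w"
  have "complex_of_real \<sigma> * complex_of_real \<sigma> = 1"
    using sig by auto
  then have "q v = q u + complex_of_real (\<sigma> * t) * (a + b) + complex_of_real (t\<^sup>2) * d"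
    unfolding v_def line by (simp add: power2_eq_square algebra_simps)
  note qv = line_form_value[OF sig t(1) u(3)[folded q_def] bd(2) coeffs t(4), folded this]
  have "norm (scaleC (complex_of_real (\<sigma> * t)) w) = t * norm w"
    using sig t(1) by (auto simp: norm_scaleC)
  also have "\<dots> \<le> t * M"
    using t(1) w(2) by (simp add: mult_left_mono)
  finally have "norm (scaleC (complex_of_real (\<sigma> * t)) w) \<le> 1 / 4"
    using t(3) by linarith
  note N = norm_perturbed_unit[OF u(2) this, folded v_def]
  have "0 \<le> Im (q v)"
    using upper onD by (simp add: q_def v_def)
  have "0 \<le> M"
    using w(2) norm_ge_zero order_trans by blast
  define z where "z = q v / complex_of_real ((norm v)\<^sup>2)"
  have "v \<noteq> 0"
    using N by auto
  then have "z \<in> num_range D B"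
    using num_range_normalize[OF lin] onD by (simp add: z_def q_def v_def)
  moreover note normalized_value_below_parabola[OF sig t(1,2) _ qv(1) \<open>0 \<le> Im (q v)\<close> qv(2,3) N,
      folded z_def]
  ultimately show ?thesis
    using \<open>0 \<le> M\<close> by (intro bexI[of _ z]) simp_all
qed

lemma eventually_small_multiple:
  fixes k b :: real
  assumes "b > 0"
  shows "\<forall>\<^sub>F t in at_right 0. t * k < b"
  using order_tendstoD(2)[OF tendsto_mult_left_zero[OF tendsto_ident_at] assms] by simp

lemma num_range_points_below_parabola:
  fixes B :: "'a::complex_inner \<Rightarrow> 'a" and c \<sigma> :: real
  assumes lin: "lin_op D B" and upper: "\<forall>z\<in>num_range D B. 0 \<le> Im z"
    and near: "0 \<in> closure (num_range D B)"
    and below: "c > 0" "\<forall>x\<in>D. c * norm x \<le> norm (B x)"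
    and onto: "\<And>t y. t > 0 \<Longrightarrow> \<exists>w\<in>D. B w + scaleC (\<i> * complex_of_real t) w = y"
    and sig: "\<sigma> = 1 \<or> \<sigma> = -1"
  shows "\<exists>K. \<forall>\<delta>>0. \<exists>z\<in>num_range D B. 0 < \<sigma> * Re z \<and> cmod z \<le> \<delta> \<and> Im z \<le> K * (Re z)\<^sup>2"
proof -
  define M where "M = 2 / c"
  define R where "R = M + M\<^sup>2"
  have "\<exists>z\<in>num_range D B. 0 < \<sigma> * Re z \<and> cmod z \<le> \<delta> \<and> Im z \<le> 6 * (1 + R) * (Re z)\<^sup>2"
    if "\<delta> > 0" for \<delta>
  proof -
    have "\<forall>\<^sub>F t in at_right 0. 0 < t \<and> t * 1 < 1 \<and> t * 2 < c \<and> t * M < 1 / 4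
        \<and> t * (2 + 2 * R + 2 * M) < 1 \<and> t * (10 + 4 * R) < \<delta>"
      using below(1) \<open>\<delta> > 0\<close>
      by (intro eventually_conj eventually_at_right_less eventually_small_multiple) auto
    then obtain t where t: "0 < t" "t < 1" "t * 2 < c" "t * M < 1 / 4"
      "t * (2 + 2 * R + 2 * M) < 1" "t * (10 + 4 * R) < \<delta>"
      using eventually_happens'[OF trivial_limit_at_right_real] by auto
    obtain z1 where "z1 \<in> num_range D B" "cmod z1 < t\<^sup>2"
      using near t(1) unfolding closure_approachable by (metis dist_norm diff_zero zero_less_power)
    then obtain u where u: "u \<in> D" "norm u = 1" "cmod (cinner (B u) u) \<le> t\<^sup>2"
      unfolding num_range_def by force
    obtain w where w: "w \<in> D" "B w + scaleC (\<i> * complex_of_real t) w = u"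
      using onto t(1) by blast
    have "norm w \<le> M"
      unfolding M_def using below(2) w(1) t(1,3)
      by (intro resolvent_equation_norm_bound[where B = B and w = w, OF below(1) _ u(2) w(2)]) auto
    have "\<exists>z\<in>num_range D B. 0 < \<sigma> * Re z \<and> cmod z \<le> (10 + 4 * R) * t
        \<and> Im z \<le> 6 * (1 + R) * (Re z)\<^sup>2"
      unfolding R_def
      by (rule perturbed_vector_below_parabola[OF lin _ u w(1) \<open>norm w \<le> M\<close> w(2) _ _ _ _ sig])
        (use t form_Im_nonneg[OF lin upper] in \<open>auto simp: R_def\<close>)
    then obtain z where z: "z \<in> num_range D B" "0 < \<sigma> * Re z" "cmod z \<le> (10 + 4 * R) * t"
      "Im z \<le> 6 * (1 + R) * (Re z)\<^sup>2"
      by blast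
    then show ?thesis
      using t(6) by (intro bexI[of _ z]) (auto simp: mult.commute)
  qed
  then show ?thesis by blast
qed

section \<open>Reduction of the theorem to the normalised situation\<close>

lemma rotated_num_range:
  assumes e: "cmod e = 1"
    and upper: "\<forall>z\<in>closure (num_range D A). 0 \<le> Im ((z - lam) / e)"
    and lam: "lam \<in> closure (num_range D A)"
  defines "B \<equiv> \<lambda>x. scaleC (cnj e) (A x - scaleC lam x)"
  shows "\<forall>z\<in>num_range D B. 0 \<le> Im z" "0 \<in> closure (num_range D B)"
    "\<And>z. z \<in> num_range D B \<Longrightarrow> lam + e * z \<in> num_range D A"
proof -
  have rot: "cnj e * (z - lam) = (z - lam) / e" for z
    using e by (simp add: complex_div_cnj[of "z - lam" e] mult.commute)
  have range: "num_range D B = (\<lambda>z. cnj e * (z - lam)) ` num_range D A"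
    unfolding B_def by (rule num_range_affine)
  then have preimage: "\<exists>z'\<in>closure (num_range D A). z' \<in> num_range D A \<and> z = cnj e * (z' - lam)"
    if "z \<in> num_range D B" for z
    using that closure_subset by blast
  show "\<forall>z\<in>num_range D B. 0 \<le> Im z"
    using preimage upper by (auto simp: rot)
  show "lam + e * z \<in> num_range D A" if z: "z \<in> num_range D B" for z
  proof -
    obtain z' where "z' \<in> num_range D A" "z = cnj e * (z' - lam)"
      using preimage[OF z] by blast
    moreover have "lam + e * (cnj e * (z' - lam)) = z'"
      using e complex_norm_square[of e] by (simp add: mult.assoc [symmetric])
    ultimately show ?thesis by simp
  qed
  have "continuous_on (closure (num_range D A)) (\<lambda>z. cnj e * (z - lam))"
    by (intro continuous_on_mult_left continuous_on_diff continuous_on_id continuous_on_const)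
  then have "(\<lambda>z. cnj e * (z - lam)) ` closure (num_range D A) \<subseteq> closure (num_range D B)"
    unfolding range by (rule image_closure_subset) (simp_all add: closure_subset)
  with lam have "cnj e * (lam - lam) \<in> closure (num_range D B)"
    by blast
  then show "0 \<in> closure (num_range D B)"
    by simp
qed

text \<open>Every \<open>\<mu> = \<lambda> - ite\<close> with \<open>t > 0\<close> lies strictly below the frame line, hence outside the closed
  numerical range and so in the resolvent set: \<open>A - \<mu>\<close> is onto, i.e. \<open>B + it\<close> is onto.\<close>
lemma rotated_resolvent_onto:
  assumes e: "cmod e = 1"
    and upper: "\<forall>z\<in>closure (num_range D A). 0 \<le> Im ((z - lam) / e)"
    and spec: "op_spectrum D A \<subseteq> closure (num_range D A)"
    and t: "t > 0"
  defines "B \<equiv> \<lambda>x. scaleC (cnj e) (A x - scaleC lam x)"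
  shows "\<exists>w\<in>D. B w + scaleC (\<i> * complex_of_real t) w = y"
proof -
  have ee: "cnj e * e = 1"
    using e complex_norm_square[of e] by (simp add: mult.commute)
  define \<mu> where "\<mu> = lam - \<i> * complex_of_real t * e"
  have "Im ((\<mu> - lam) / e) = - t"
    using e by (auto simp: \<mu>_def)
  then have "\<mu> \<notin> closure (num_range D A)"
    using upper t by fastforce
  then have "bij_betw (\<lambda>x. A x - scaleC \<mu> x) D UNIV"
    using spec unfolding op_spectrum_def resolvent_set_def by blast
  then have "scaleC e y \<in> (\<lambda>x. A x - scaleC \<mu> x) ` D"
    by (simp add: bij_betw_def)
  then obtain w where w: "scaleC e y = A w - scaleC \<mu> w" "w \<in> D"
    by (rule imageE)
  have "A w - scaleC lam w = (A w - scaleC \<mu> w) + scaleC (\<mu> - lam) w"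
    by (simp add: scaleC_diff_left)
  also have "\<dots> = scaleC e y - scaleC (\<i> * complex_of_real t * e) w"
    unfolding w(1) [symmetric] by (simp add: \<mu>_def scaleC_minus_left)
  finally have "B w = scaleC (cnj e) (scaleC e y - scaleC (\<i> * complex_of_real t * e) w)"
    by (simp only: B_def)
  also have "\<dots> = scaleC (cnj e * e) y - scaleC (cnj e * (\<i> * complex_of_real t * e)) w"
    by (simp only: scaleC_diff_right scaleC_scaleC)
  also have "cnj e * (\<i> * complex_of_real t * e) = \<i> * complex_of_real t"
    using ee by algebra
  finally have "B w + scaleC (\<i> * complex_of_real t) w = y"
    using ee by (simp add: scaleC_one)
  with w(2) show ?thesis
    by blast
qed

lemma rotated_operator:
  assumes lin: "lin_op D A" and e: "cmod e = 1"
    and upper: "\<forall>z\<in>closure (num_range D A). 0 \<le> Im ((z - lam) / e)"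
    and spec: "op_spectrum D A \<subseteq> closure (num_range D A)"
    and lam: "lam \<in> closure (num_range D A)"
    and nap: "lam \<notin> approx_point_spectrum D A"
  defines "B \<equiv> \<lambda>x. scaleC (cnj e) (A x - scaleC lam x)"
  shows "lin_op D B" "\<forall>z\<in>num_range D B. 0 \<le> Im z" "0 \<in> closure (num_range D B)"
    "\<And>z. z \<in> num_range D B \<Longrightarrow> lam + e * z \<in> num_range D A"
    "\<exists>c>0. \<forall>x\<in>D. c * norm x \<le> norm (B x)"
    "\<And>t y. t > 0 \<Longrightarrow> \<exists>w\<in>D. B w + scaleC (\<i> * complex_of_real t) w = y"
  using lin_op_affine[OF lin] rotated_num_range[OF e upper lam] rotated_resolvent_onto[OF e upper spec]
    bounded_below_off_approx_point_spectrum[OF lin nap] e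
  by (simp_all add: B_def norm_scaleC)

theorem mainTheorem4:
  fixes D :: "'a::{complex_inner, complete_space} set"
    and A :: "'a \<Rightarrow> 'a"
    and lam :: complex
  assumes "lin_op D A"
    and "densely_defined D"
    and "closed_op D A"
    and "interior (num_range D A) \<noteq> {}"
    and "num_range D A \<noteq> UNIV"
    and "D \<subseteq> adj_dom D A"
    and "op_spectrum D A \<subseteq> closure (num_range D A)"
    and "lam \<in> frontier (num_range D A)"
    and "unilateral_infinite_curvature (closure (num_range D A)) lam"
  shows "lam \<in> approx_point_spectrum D A"
proof (rule ccontr)
  assume nap: "lam \<notin> approx_point_spectrum D A"
  define \<Omega> where "\<Omega> = closure (num_range D A)"
  obtain e and \<sigma> :: real where frame: "curv_frame \<Omega> lam e" and sig: "\<sigma> = 1 \<or> \<sigma> = -1"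
    and curv: "\<And>K. \<exists>\<delta>>0. \<forall>w. lam + e * w \<in> frontier \<Omega> \<and> cmod w \<le> \<delta> \<and> 0 < \<sigma> * Re w
        \<longrightarrow> K < Im w / (Re w)\<^sup>2"
    using unilateral_infinite_curvature_side[OF assms(9)[folded \<Omega>_def]] by blast
  have e: "cmod e = 1" and upper: "\<forall>z\<in>\<Omega>. 0 \<le> Im ((z - lam) / e)"
    using frame by (simp_all add: curv_frame_def)
  have lam: "lam \<in> \<Omega>"
    using assms(8) by (simp add: \<Omega>_def frontier_def)
  define B where "B x = scaleC (cnj e) (A x - scaleC lam x)" for x
  note B = rotated_operator[OF assms(1) e upper[unfolded \<Omega>_def] assms(7) lam[unfolded \<Omega>_def] nap,
      folded B_def]
  obtain K where K: "\<And>\<delta>. \<delta> > 0 \<Longrightarrow> \<exists>z\<in>num_range D B. 0 < \<sigma> * Re z \<and> cmod z \<le> \<delta>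
      \<and> Im z \<le> K * (Re z)\<^sup>2"
    using B(5) num_range_points_below_parabola[OF B(1-3) _ _ B(6) sig] by blast
  obtain \<delta> where "\<delta> > 0" and \<delta>: "\<forall>w. lam + e * w \<in> frontier \<Omega> \<and> cmod w \<le> \<delta> \<and> 0 < \<sigma> * Re w
      \<longrightarrow> K < Im w / (Re w)\<^sup>2"
    using curv by blast
  obtain z where z: "z \<in> num_range D B" "0 < \<sigma> * Re z" "cmod z \<le> \<delta>" "Im z \<le> K * (Re z)\<^sup>2"
    using K[OF \<open>\<delta> > 0\<close>] by blast
  have "lam + e * z \<in> \<Omega>"
    using B(4)[OF z(1)] closure_subset by (auto simp: \<Omega>_def)
  then obtain w where "lam + e * w \<in> frontier \<Omega>" "cmod w \<le> cmod z" "0 < \<sigma> * Re w"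
    "Im w / (Re w)\<^sup>2 \<le> K"
    using frontier_point_below_parabola[OF _ e upper _ z(2,4)] by (auto simp: \<Omega>_def)
  with \<delta> z(3) show False
    by (meson leD order_trans)
qed

end
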